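(* Let $\rho$ be a state on $\mathcal H_A\otimes\mathcal H_B$ with $\dim\mathcal H_A,\dim\mathcal H_B<\infty$, $d=\dim\mathcal H_B$, and let $\mathcal C(\rho)$ be its maximal steered coherence. Then $\mathcal C(\rho)=0$ if and only if $\rho$ is classical on Bob's side (zero discord for Bob), i.e. there exist an orthonormal basis $\{|\xi_i\rangle\}_{i=1}^d$ of $\mathcal H_B$, probabilities $p_i\ge 0$ with $\sum_i p_i=1$, and states $\rho_i^A$ on $\mathcal H_A$ such that $$\rho=\sum_{i=1}^{d}p_i\,\rho_i^A\otimes|\xi_i\rangle\langle\xi_i|.$$
   Context: For a POVM element $M$ on $\mathcal H_A$ ($0\le M\le \mathbb 1$) with $p_M:=\mathrm{tr}(M\otimes\mathbb 1\,\rho)>0$, Bob's steered state is $\rho_B^M:=\mathrm{tr}_A(M\otimes\mathbb 1\,\rho)/p_M$. Let $\rho_B=\mathrm{tr}_A\rho$. The $\ell_1$-coherence of a state $\sigma$ in an orthonormal basis $\Xi=\{|\xi_i\rangle\}$ is $C(\sigma,\Xi)=\sum_{i\neq j}|\langle\xi_i|\sigma|\xi_j\rangle|$. The maximal steered coherence is $$\mathcal C(\rho)=\inf_{\Xi}\ \max_{M}\ \frac{1}{p_M}\sum_{i\neq j}\big|\langle\xi_i|\mathrm{tr}_A(M\otimes \mathbb 1\,\rho)|\xi_j\rangle\big|,$$ where the infimum is over all orthonormal eigenbases $\Xi$ of $\rho_B$ (if $\rho_B$ is non-degenerate, this eigenbasis is unique up to phases and no infimum is needed) and the maximum is over POVM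 elements $M$ on $\mathcal H_A$ with $p_M>0$. *)

theory Defs
  imports Complex_Main
begin

text \<open>Operators on the finite-dimensional Hilbert space with orthonormal (computational)
basis indexed by a finite type 'n are represented by their matrices 'n \<Rightarrow> 'n \<Rightarrow> complex.
H_A has basis indexed by 'a, H_B by 'b, and H_A \<otimes> H_B by 'a \<times> 'b.\<close>

type_synonym 'n cop = "'n \<Rightarrow> 'n \<Rightarrow> complex"

definition op_mult :: "'n::finite cop \<Rightarrow> 'n cop \<Rightarrow> 'n cop" where
  "op_mult A B = (\<lambda>i k. \<Sum>j\<in>UNIV. A i j * B j k)"

definition op_trace :: "'n::finite cop \<Rightarrow> complex" where
  "op_trace A = (\<Sum>i\<in>UNIV. A i i)"

definition op_id :: "'n cop" where
  "op_id = (\<lambda>i j. if i = j then 1 else 0)"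

definition quad_form :: "'n::finite cop \<Rightarrow> ('n \<Rightarrow> complex) \<Rightarrow> complex" where
  "quad_form A v = (\<Sum>i\<in>UNIV. \<Sum>j\<in>UNIV. cnj (v i) * A i j * v j)"

definition psd :: "'n::finite cop \<Rightarrow> bool" where
  "psd A \<longleftrightarrow> (\<forall>v. quad_form A v \<in> \<real> \<and> 0 \<le> Re (quad_form A v))"

definition is_state :: "'n::finite cop \<Rightarrow> bool" where
  "is_state A \<longleftrightarrow> psd A \<and> op_trace A = 1"

definition tensor :: "'a cop \<Rightarrow> 'b cop \<Rightarrow> ('a \<times> 'b) cop" where
  "tensor A B = (\<lambda>(i, j) (k, l). A i k * B j l)"

definition ptrace_A :: "('a::finite \<times> 'b) cop \<Rightarrow> 'b cop" where
  "ptrace_A R = (\<lambda>j l. \<Sum>i\<in>UNIV. R (i, j) (i, l))"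

definition povm_elem :: "'n::finite cop \<Rightarrow> bool" where
  "povm_elem M \<longleftrightarrow> psd M \<and> psd (\<lambda>i j. op_id i j - M i j)"

definition cinner :: "('n::finite \<Rightarrow> complex) \<Rightarrow> ('n \<Rightarrow> complex) \<Rightarrow> complex" where
  "cinner u v = (\<Sum>i\<in>UNIV. cnj (u i) * v i)"

text \<open>An orthonormal basis of C^'n, given as a family of CARD('n) orthonormal vectors
(indexed by 'n); such a family is automatically a basis.\<close>
definition orthonormal_basis :: "('n::finite \<Rightarrow> ('n \<Rightarrow> complex)) \<Rightarrow> bool" where
  "orthonormal_basis \<xi> \<longleftrightarrow> (\<forall>i j. cinner (\<xi> i) (\<xi> j) = (if i = j then 1 else 0))"

definition is_eigenbasis :: "'n::finite cop \<Rightarrow> ('n \<Rightarrow> ('n \<Rightarrow> complex)) \<Rightarrow> bool" where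
  "is_eigenbasis S \<xi> \<longleftrightarrow> orthonormal_basis \<xi> \<and>
     (\<forall>i. \<exists>c. \<forall>k. (\<Sum>l\<in>UNIV. S k l * \<xi> i l) = c * \<xi> i k)"

definition mat_elem :: "('n::finite \<Rightarrow> ('n \<Rightarrow> complex)) \<Rightarrow> 'n cop \<Rightarrow> 'n \<Rightarrow> 'n \<Rightarrow> complex" where
  "mat_elem \<xi> S i j = (\<Sum>k\<in>UNIV. \<Sum>l\<in>UNIV. cnj (\<xi> i k) * S k l * \<xi> j l)"

definition ketbra :: "('n \<Rightarrow> complex) \<Rightarrow> 'n cop" where
  "ketbra v = (\<lambda>k l. v k * cnj (v l))"

text \<open>p_M = tr((M \<otimes> 1) rho) (real for POVM elements and states; we take the real part).\<close>
definition prob_M :: "('a::finite \<times> 'b::finite) cop \<Rightarrow> 'a cop \<Rightarrow> real" where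
  "prob_M R M = Re (op_trace (op_mult (tensor M op_id) R))"

definition steered_unnorm :: "('a::finite \<times> 'b::finite) cop \<Rightarrow> 'a cop \<Rightarrow> 'b cop" where
  "steered_unnorm R M = ptrace_A (op_mult (tensor M op_id) R)"

definition steered_coherence ::
  "('a::finite \<times> 'b::finite) cop \<Rightarrow> ('b \<Rightarrow> ('b \<Rightarrow> complex)) \<Rightarrow> 'a cop \<Rightarrow> real" where
  "steered_coherence R \<xi> M =
     (\<Sum>i\<in>UNIV. \<Sum>j\<in>UNIV. if i \<noteq> j then cmod (mat_elem \<xi> (steered_unnorm R M) i j) else 0)
       / prob_M R M"

definition max_steered_coherence :: "('a::finite \<times> 'b::finite) cop \<Rightarrow> real" where
  "max_steered_coherence R =
     Inf {(SUP M \<in> {M. povm_elem M \<and> prob_M R M > 0}. steered_coherence R \<xi> M)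
          | \<xi>. is_eigenbasis (ptrace_A R) \<xi>}"

end

(* Expand \<rho> in blocks \<rho> = \<Sum>\<^sub>i\<^sub>j \<rho>\<^sub>i\<^sub>j \<otimes> |\<xi>\<^sub>i\<rangle>\<langle>\<xi>\<^sub>j| along an eigenbasis \<xi> of \<rho>\<^sub>B. Steering with an
   effect M produces the matrix elements \<langle>\<xi>\<^sub>i| tr\<^sub>A((M \<otimes> 1) \<rho>) |\<xi>\<^sub>j\<rangle> = tr(M \<rho>\<^sub>i\<^sub>j), so a
   classical-quantum state (all \<rho>\<^sub>i\<^sub>j with i \<noteq> j zero) steers no coherence in the basis \<xi>.
   Conversely, polarising with the rank-one effects |e\<^sub>a + z e\<^sub>b\<rangle>\<langle>e\<^sub>a + z e\<^sub>b| / 4 bounds every entry of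
   an off-diagonal block by a constant times the maximal steered coherence in the basis \<xi>. The
   infimum over eigenbases need not be attained, so one minimises the continuous total weight of
   the off-diagonal blocks over the compact set of eigenbases: at the minimiser it is bounded by a
   multiple of every such supremum, hence by their infimum 0, and the blocks \<rho>\<^sub>i\<^sub>i normalised to states give the decomposition.
   The spectral theorem used along the way is proved by maximising the Rayleigh quotient. *)

theory Submission
  imports Defs "HOL-Analysis.Analysis"
begin

section \<open>Matrices and sesquilinear forms on \<open>\<complex>\<^sup>n\<close>\<close>

definition mat_vec :: "'n::finite cop \<Rightarrow> ('n \<Rightarrow> complex) \<Rightarrow> ('n \<Rightarrow> complex)" where
  "mat_vec A v = (\<lambda>k. \<Sum>l\<in>UNIV. A k l * v l)"

definition sesq :: "'n::finite cop \<Rightarrow> ('n \<Rightarrow> complex) \<Rightarrow> ('n \<Rightarrow> complex) \<Rightarrow> complex" where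
  "sesq A x y = (\<Sum>i\<in>UNIV. \<Sum>j\<in>UNIV. cnj (x i) * A i j * y j)"

definition hermitian :: "'n cop \<Rightarrow> bool" where
  "hermitian A \<longleftrightarrow> (\<forall>i j. A i j = cnj (A j i))"

definition unit_vec :: "'n \<Rightarrow> 'n \<Rightarrow> complex" where
  "unit_vec i = (\<lambda>x. if x = i then 1 else 0)"

lemma if_zero_complex_simps:
  fixes x y :: complex
  shows "x * (if P then y else 0) = (if P then x * y else 0)"
    "(if P then y else 0) * x = (if P then y * x else 0)"
    "cnj (if P then y else 0) = (if P then cnj y else 0)"
  by auto

lemma quad_form_eq_sesq: "quad_form A v = sesq A v v"
  by (simp add: quad_form_def sesq_def)

lemma sesq_eq_cinner: "sesq A x y = cinner x (mat_vec A y)"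
  by (simp add: sesq_def cinner_def mat_vec_def sum_distrib_left mult.assoc)

lemma sesq_unit_vec: "sesq A (unit_vec a) (unit_vec b) = A a b"
  by (simp add: sesq_def unit_vec_def if_zero_complex_simps sum.delta)

lemma sesq_add_left: "sesq A (\<lambda>i. x i + y i) z = sesq A x z + sesq A y z"
  by (simp add: sesq_def ring_distribs sum.distrib)

lemma sesq_add_right: "sesq A z (\<lambda>i. x i + y i) = sesq A z x + sesq A z y"
  by (simp add: sesq_def ring_distribs sum.distrib)

lemma sesq_scale_left: "sesq A (\<lambda>i. c * x i) z = cnj c * sesq A x z"
  by (simp add: sesq_def sum_distrib_left algebra_simps)

lemma sesq_scale_right: "sesq A z (\<lambda>i. c * x i) = c * sesq A z x"
  by (simp add: sesq_def sum_distrib_left algebra_simps)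

lemmas sesq_linear = sesq_add_left sesq_add_right sesq_scale_left sesq_scale_right

lemma sesq_expand:
  "sesq A (\<lambda>t. u t + z * w t) (\<lambda>t. u t + z * w t) =
    sesq A u u + z * sesq A u w + cnj z * sesq A w u + cnj z * z * sesq A w w"
  by (simp add: sesq_linear algebra_simps)

lemma sesq_polarization:
  "4 * sesq A u w = sesq A (\<lambda>t. u t + 1 * w t) (\<lambda>t. u t + 1 * w t)
     - sesq A (\<lambda>t. u t + (-1) * w t) (\<lambda>t. u t + (-1) * w t)
     - \<i> * sesq A (\<lambda>t. u t + \<i> * w t) (\<lambda>t. u t + \<i> * w t)
     + \<i> * sesq A (\<lambda>t. u t + (-\<i>) * w t) (\<lambda>t. u t + (-\<i>) * w t)"
  unfolding sesq_expand by (simp add: algebra_simps)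

lemma sesq_hermitian_swap:
  assumes "hermitian A"
  shows "sesq A y x = cnj (sesq A x y)"
proof -
  have A: "cnj (A i j) = A j i" for i j
    using assms unfolding hermitian_def by (metis complex_cnj_cnj)
  have "cnj (sesq A x y) = (\<Sum>i\<in>UNIV. \<Sum>j\<in>UNIV. x i * A j i * cnj (y j))"
    unfolding sesq_def cnj_sum by (intro sum.cong refl) (simp add: A)
  also have "\<dots> = (\<Sum>j\<in>UNIV. \<Sum>i\<in>UNIV. x i * A j i * cnj (y j))"
    by (rule sum.swap)
  also have "\<dots> = sesq A y x"
    unfolding sesq_def by (intro sum.cong refl) (simp add: mult.commute mult.left_commute)
  finally show ?thesis by simp
qed

lemma cinner_add_right: "cinner z (\<lambda>i. x i + y i) = cinner z x + cinner z y"
  by (simp add: cinner_def ring_distribs sum.distrib)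

lemma cinner_add_left: "cinner (\<lambda>i. x i + y i) z = cinner x z + cinner y z"
  by (simp add: cinner_def ring_distribs sum.distrib)

lemma cinner_scale_right: "cinner z (\<lambda>i. c * x i) = c * cinner z x"
  by (simp add: cinner_def sum_distrib_left algebra_simps)

lemma cinner_scale_left: "cinner (\<lambda>i. c * x i) z = cnj c * cinner x z"
  by (simp add: cinner_def sum_distrib_left algebra_simps)

lemmas cinner_linear = cinner_add_left cinner_add_right cinner_scale_left cinner_scale_right

lemma cinner_sum_right: "cinner z (\<lambda>k. \<Sum>i\<in>I. f i k) = (\<Sum>i\<in>I. cinner z (f i))"
  by (simp add: cinner_def sum_distrib_left) (rule sum.swap)

lemma cnj_cinner: "cnj (cinner x y) = cinner y x"
  by (simp add: cinner_def mult.commute)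

lemma cnj_mult_self: "cnj z * z = complex_of_real ((cmod z)\<^sup>2)"
  by (subst mult.commute) (simp add: complex_mult_cnj cmod_power2)

lemma cinner_self: "cinner x x = of_real (\<Sum>i\<in>UNIV. (cmod (x i))\<^sup>2)"
  unfolding cinner_def of_real_sum by (simp add: cnj_mult_self)

lemma Im_cinner_self: "Im (cinner x x) = 0"
  by (simp add: cinner_self)

lemma cinner_self_eq_Re: "cinner x x = of_real (Re (cinner x x))"
  by (simp add: complex_eq_iff Im_cinner_self)

lemma Re_cinner_self_nonneg: "0 \<le> Re (cinner x x)"
  by (simp add: cinner_self sum_nonneg del: of_real_power)

lemma Re_cinner_self_pos: "x \<noteq> (\<lambda>_. 0) \<Longrightarrow> 0 < Re (cinner x x)"
proof -
  assume "x \<noteq> (\<lambda>_. 0)"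
  then obtain i where i: "x i \<noteq> 0" by auto
  have "0 < (\<Sum>j\<in>UNIV. (cmod (x j))\<^sup>2)"
    by (rule sum_pos2[where i=i]) (use i in auto)
  then show ?thesis by (simp add: cinner_self)
qed

lemma cinner_mat_vec_hermitian:
  assumes "hermitian A"
  shows "cinner x (mat_vec A y) = cinner (mat_vec A x) y"
proof -
  have "cinner x (mat_vec A y) = cnj (sesq A y x)"
    using sesq_hermitian_swap[OF assms, of y x] by (simp add: sesq_eq_cinner)
  also have "\<dots> = cinner (mat_vec A x) y"
    by (simp add: sesq_eq_cinner cnj_cinner)
  finally show ?thesis .
qed

lemma quad_form_one_point:
  "quad_form A (\<lambda>x. if x = i then a else 0) = cnj a * A i i * a"
  unfolding quad_form_def by (simp add: if_zero_complex_simps sum.delta')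

lemma quad_form_two_points:
  assumes "i \<noteq> j"
  shows "quad_form A (\<lambda>x. if x = i then a else if x = j then b else 0) =
     cnj a * A i i * a + cnj a * A i j * b + cnj b * A j i * a + cnj b * A j j * b"
proof -
  have "(\<lambda>x. if x = i then a else if x = j then b else 0) =
      (\<lambda>x. (if x = i then a else 0) + (if x = j then b else 0))"
    using assms by auto
  then show ?thesis
    using assms by (simp add: quad_form_def ring_distribs sum.distrib if_zero_complex_simps sum.delta')
qed

text \<open>Testing the quadratic form on \<open>e\<^sub>i\<close>, \<open>e\<^sub>i + e\<^sub>j\<close> and \<open>e\<^sub>i + \<i> e\<^sub>j\<close> recovers the
  entries, so a form that is real everywhere comes from a Hermitian matrix.\<close>
lemma psd_hermitian:
  assumes "psd A"
  shows "hermitian A"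
  unfolding hermitian_def
proof (intro allI)
  fix i j
  have real: "\<And>v. Im (quad_form A v) = 0"
    using assms unfolding psd_def by (simp add: complex_is_Real_iff)
  have ii: "Im (A i i) = 0" and jj: "Im (A j j) = 0"
    using real[of "\<lambda>x. if x = i then 1 else 0"] real[of "\<lambda>x. if x = j then 1 else 0"]
    by (simp_all add: quad_form_one_point)
  show "A i j = cnj (A j i)"
  proof (cases "i = j")
    case True
    then show ?thesis using ii by (simp add: complex_eq_iff)
  next
    case False
    have "Im (A i j + A j i) = 0"
      using real[of "\<lambda>x. if x = i then 1 else if x = j then 1 else 0"] False ii jj
      by (simp add: quad_form_two_points)
    moreover have "Re (A i j - A j i) = 0"
      using real[of "\<lambda>x. if x = i then 1 else if x = j then \<i> else 0"] False ii jj
      by (simp add: quad_form_two_points algebra_simps)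
    ultimately show ?thesis by (simp add: complex_eq_iff)
  qed
qed

lemma psd_sesq_self: "psd A \<Longrightarrow> 0 \<le> Re (sesq A x x) \<and> Im (sesq A x x) = 0"
  unfolding psd_def quad_form_eq_sesq by (simp add: complex_is_Real_iff)

text \<open>Expand \<open>0 \<le> \<langle>x + w y, A (x + w y)\<rangle>\<close> with the phase \<open>w\<close> chosen so that the cross
  terms add up to \<open>-2 |\<langle>x, A y\<rangle>|\<close>.\<close>
lemma psd_sesq_amgm:
  assumes "psd A"
  shows "2 * cmod (sesq A x y) \<le> Re (sesq A x x) + Re (sesq A y y)"
proof (cases "sesq A x y = 0")
  case True
  then show ?thesis using psd_sesq_self[OF assms, of x] psd_sesq_self[OF assms, of y] by simp
next
  case False
  define b where "b = sesq A x y"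
  define r where "r = cmod b"
  have r0: "r \<noteq> 0" using False by (simp add: r_def b_def)
  define w where "w = - cnj b / of_real r"
  have bb: "cnj b * b = of_real (r * r)"
    by (simp add: cnj_mult_self r_def power2_eq_square)
  have wb: "w * b = - of_real r"
  proof -
    have "w * b = - (cnj b * b) / of_real r" by (simp add: w_def)
    also have "\<dots> = - of_real r" using r0 by (simp add: bb)
    finally show ?thesis .
  qed
  have cwb: "cnj w * cnj b = - of_real r"
    using arg_cong[OF wb, of cnj] by simp
  have ww: "cnj w * w = 1"
  proof -
    have "cnj w * w = (cnj b * b) / (of_real r * of_real r)" by (simp add: w_def)
    also have "\<dots> = 1" using r0 by (simp add: bb)
    finally show ?thesis .
  qed
  have yx: "sesq A y x = cnj b"
    using sesq_hermitian_swap[OF psd_hermitian[OF assms], of x y] by (simp add: b_def)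
  have "sesq A (\<lambda>i. x i + w * y i) (\<lambda>i. x i + w * y i) = sesq A x x - 2 * of_real r + sesq A y y"
    by (simp add: sesq_expand yx wb cwb ww flip: b_def)
  moreover have "0 \<le> Re (sesq A (\<lambda>i. x i + w * y i) (\<lambda>i. x i + w * y i))"
    using psd_sesq_self[OF assms] by blast
  ultimately show ?thesis by (simp add: b_def r_def)
qed

lemma psd_zero_diagonal:
  assumes "psd A" "\<forall>a. A a a = 0"
  shows "A a b = 0"
  using psd_sesq_amgm[OF assms(1), of "unit_vec a" "unit_vec b"] assms(2)
  by (simp add: sesq_unit_vec)

lemma psd_op_id: "psd (op_id :: 'n::finite cop)"
proof -
  have "quad_form (op_id :: 'n cop) v = cinner v v" for v
    by (simp add: quad_form_def cinner_def op_id_def if_zero_complex_simps sum.delta)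
  then show ?thesis
    unfolding psd_def by (simp add: cinner_self sum_nonneg del: of_real_power)
qed

lemma povm_elem_op_id: "povm_elem (op_id :: 'n::finite cop)"
  unfolding povm_elem_def by (simp add: psd_op_id) (simp add: psd_def quad_form_def)

definition vec_of :: "('n::finite \<Rightarrow> complex) \<Rightarrow> complex^'n" where
  "vec_of x = (\<chi> i. x i)"

lemma vec_of_nth [simp]: "vec_of x $ i = x i"
  by (simp add: vec_of_def)

lemma vec_nth_vec_of [simp]: "($) (vec_of x) = x"
  by (simp add: fun_eq_iff)

lemma vec_of_add: "vec_of (\<lambda>l. x l + y l) = vec_of x + vec_of y"
  by (simp add: vec_of_def vec_eq_iff)

lemma inner_vec_of: "vec_of x \<bullet> vec_of y = Re (cinner x y)"
  unfolding inner_vec_def cinner_def Re_sum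
  by (rule sum.cong) (simp_all add: inner_complex_def)

lemma norm_vec_of_square: "(norm (vec_of x))\<^sup>2 = Re (cinner x x)"
  by (simp add: power2_norm_eq_inner inner_vec_of)

lemma norm_vec_of_scale: "norm (vec_of (\<lambda>l. z * x l)) = cmod z * norm (vec_of x)"
proof -
  have "(norm (vec_of (\<lambda>l. z * x l)))\<^sup>2 = (cmod z * norm (vec_of x))\<^sup>2"
    by (simp add: norm_vec_of_square cinner_linear cnj_mult_self power_mult_distrib flip: mult.assoc)
  then show ?thesis by (simp add: power2_eq_iff_nonneg)
qed

lemma norm_vec_of_eq_1_iff: "norm (vec_of x) = 1 \<longleftrightarrow> cinner x x = 1"
  unfolding norm_eq_sqrt_inner inner_vec_of by (subst cinner_self_eq_Re) simp

lemma norm_vec_of_unit_vec: "norm (vec_of (unit_vec a :: 'n::finite \<Rightarrow> complex)) = 1"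
  by (simp add: norm_vec_of_eq_1_iff cinner_def unit_vec_def if_zero_complex_simps sum.delta)

lemma cinner_Cauchy_Schwarz: "(cmod (cinner v w))\<^sup>2 \<le> Re (cinner v v) * Re (cinner w w)"
proof (cases "cinner v w = 0")
  case True
  then show ?thesis using Re_cinner_self_nonneg[of v] Re_cinner_self_nonneg[of w] by simp
next
  case False
  define c where "c = cinner v w"
  define z where "z = cnj c / of_real (cmod c)"
  have z1: "cmod z = 1" using False by (simp add: z_def c_def norm_divide)
  have "z * c = (cnj c * c) / of_real (cmod c)" by (simp add: z_def)
  also have "\<dots> = of_real (cmod c)" using False by (simp add: cnj_mult_self c_def power2_eq_square)
  finally have "cmod c = Re (cinner v (\<lambda>l. z * w l))" by (simp add: cinner_scale_right c_def)
  also have "\<dots> = vec_of v \<bullet> vec_of (\<lambda>l. z * w l)" by (simp add: inner_vec_of)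
  also have "\<dots> \<le> norm (vec_of v) * norm (vec_of (\<lambda>l. z * w l))"
    by (rule norm_cauchy_schwarz)
  also have "\<dots> = norm (vec_of v) * norm (vec_of w)"
    by (simp add: norm_vec_of_scale z1)
  finally have "(cmod c)\<^sup>2 \<le> (norm (vec_of v) * norm (vec_of w))\<^sup>2"
    by (intro power_mono) auto
  then show ?thesis by (simp add: power_mult_distrib norm_vec_of_square c_def)
qed

definition phase_double :: "('i \<Rightarrow> 'n::finite \<Rightarrow> complex) \<Rightarrow> 'i \<times> bool \<Rightarrow> complex^'n" where
  "phase_double v p = vec_of (\<lambda>k. (if snd p then 1 else \<i>) * v (fst p) k)"

lemma inner_phase_double:
  assumes orth: "\<And>j j'. j \<noteq> j' \<Longrightarrow> cinner (v j) (v j') = 0"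
  shows "phase_double v p \<bullet> phase_double v q = (if p = q then Re (cinner (v (fst p)) (v (fst p))) else 0)"
proof (cases p, cases q)
  fix j b j' b'
  assume pq: "p = (j, b)" "q = (j', b')"
  define c :: "bool \<Rightarrow> complex" where "c b = (if b then 1 else \<i>)" for b
  have inner: "phase_double v (j, b) \<bullet> phase_double v (j', b') = Re (cnj (c b) * c b' * cinner (v j) (v j'))"
    by (simp add: phase_double_def inner_vec_of cinner_linear mult.assoc c_def)
  show ?thesis
  proof (cases "j = j'")
    case True
    have phases: "Re (cnj (c b) * c b') = (if b = b' then 1 else 0)"
      by (cases b; cases b') (simp_all add: c_def)
    have "phase_double v (j, b) \<bullet> phase_double v (j', b') =
        Re (cnj (c b) * c b' * of_real (Re (cinner (v j) (v j))))"
      using inner True by (simp only: flip: cinner_self_eq_Re)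
    also have "\<dots> = Re (cnj (c b) * c b') * Re (cinner (v j) (v j))"
      by simp
    finally show ?thesis
      unfolding phases using True by (simp add: pq)
  next
    case False
    then show ?thesis by (simp add: pq inner orth)
  qed
qed

text \<open>The vectors \<open>v j\<close> and \<open>\<i> v j\<close> are pairwise orthogonal for the real inner product of
  \<open>\<complex>\<^sup>n \<cong> \<real>\<^sup>2\<^sup>n\<close>, hence at most \<open>2 n\<close> of them.\<close>
lemma card_le_of_orthogonal_family:
  fixes v :: "'i::finite \<Rightarrow> 'n::finite \<Rightarrow> complex"
  assumes orth: "\<And>j j'. j \<noteq> j' \<Longrightarrow> cinner (v j) (v j') = 0"
    and nonzero: "\<And>j. v j \<noteq> (\<lambda>_. 0)"
  shows "CARD('i) \<le> CARD('n)"
proof -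
  let ?f = "phase_double v"
  have inner: "?f p \<bullet> ?f q = (if p = q then Re (cinner (v (fst p)) (v (fst p))) else 0)" for p q
    using inner_phase_double[OF orth] .
  have pos: "0 < ?f p \<bullet> ?f p" for p
    using Re_cinner_self_pos[OF nonzero] by (simp add: inner)
  have "inj ?f"
  proof (rule injI)
    fix p q
    assume "?f p = ?f q"
    then show "p = q" using inner[of p q] pos[of p] by (cases "p = q") auto
  qed
  have "pairwise orthogonal (range ?f)"
  proof (rule pairwiseI)
    fix u w
    assume "u \<in> range ?f" "w \<in> range ?f" "u \<noteq> w"
    then obtain p q where "u = ?f p" "w = ?f q" "p \<noteq> q" by auto
    then show "orthogonal u w" by (simp add: orthogonal_def inner)
  qed
  moreover have "0 \<notin> range ?f"
  proof
    assume "0 \<in> range ?f"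
    then obtain p where "?f p = 0" by auto
    with pos[of p] show False by simp
  qed
  ultimately have "independent (range ?f)" by (rule pairwise_orthogonal_independent)
  then have "card (range ?f) \<le> DIM(complex^'n)" using independent_bound by blast
  moreover have "card (range ?f) = CARD('i \<times> bool)" using \<open>inj ?f\<close> by (simp add: card_image)
  ultimately show ?thesis by simp
qed

lemma orthonormal_basis_complete:
  fixes \<xi> :: "'n::finite \<Rightarrow> 'n \<Rightarrow> complex"
  assumes on: "orthonormal_basis \<xi>" and perp: "\<forall>i. cinner (\<xi> i) x = 0"
  shows "x = (\<lambda>_. 0)"
proof (rule ccontr)
  assume x0: "x \<noteq> (\<lambda>_. 0)"
  define v :: "'n option \<Rightarrow> 'n \<Rightarrow> complex" where "v j = (case j of Some i \<Rightarrow> \<xi> i | None \<Rightarrow> x)" for j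
  have on': "cinner (\<xi> i) (\<xi> j) = (if i = j then 1 else 0)" for i j
    using on by (simp add: orthonormal_basis_def)
  have "CARD('n option) \<le> CARD('n)"
  proof (rule card_le_of_orthogonal_family)
    have "cinner x (\<xi> i) = 0" for i
      using perp cnj_cinner[of "\<xi> i" x] by simp
    then show "cinner (v j) (v j') = 0" if "j \<noteq> j'" for j j'
      using that perp on' by (cases j; cases j') (simp_all add: v_def)
    show "v j \<noteq> (\<lambda>_. 0)" for j
    proof (cases j)
      case (Some i)
      have "cinner (\<xi> i) (\<xi> i) = 1" using on' by simp
      then have "\<xi> i \<noteq> (\<lambda>_. 0)" by (auto simp: cinner_def)
      then show ?thesis using Some by (simp add: v_def)
    qed (simp add: v_def x0)
  qed
  then show False by simp
qed

lemma orthonormal_basis_expansion: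
  fixes \<xi> :: "'n::finite \<Rightarrow> 'n \<Rightarrow> complex"
  assumes on: "orthonormal_basis \<xi>"
  shows "x = (\<lambda>k. \<Sum>i\<in>UNIV. cinner (\<xi> i) x * \<xi> i k)"
proof -
  define d where "d = (\<lambda>k. x k + (-1) * (\<Sum>i\<in>UNIV. cinner (\<xi> i) x * \<xi> i k))"
  have "cinner (\<xi> j) d = 0" for j
    using on unfolding d_def cinner_add_right cinner_scale_right cinner_sum_right
    by (simp add: orthonormal_basis_def if_zero_complex_simps)
  then have "d = (\<lambda>_. 0)" using orthonormal_basis_complete[OF on] by blast
  then show ?thesis unfolding d_def by (auto simp: fun_eq_iff)
qed

lemma orthonormal_basis_resolution_of_identity:
  fixes \<xi> :: "'n::finite \<Rightarrow> 'n \<Rightarrow> complex"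
  assumes "orthonormal_basis \<xi>"
  shows "(\<Sum>i\<in>UNIV. \<xi> i k * cnj (\<xi> i l)) = (if k = l then 1 else 0)"
  using fun_cong[OF orthonormal_basis_expansion[OF assms, of "unit_vec l"], of k]
  by (simp add: cinner_def unit_vec_def if_zero_complex_simps mult.commute split: if_splits)

lemma trace_eq_sum_mat_elem:
  fixes S :: "'n::finite cop"
  assumes on: "orthonormal_basis \<xi>"
  shows "op_trace S = (\<Sum>i\<in>UNIV. mat_elem \<xi> S i i)"
proof -
  have "(\<Sum>i\<in>UNIV. mat_elem \<xi> S i i) = (\<Sum>i\<in>UNIV. \<Sum>k\<in>UNIV. \<Sum>l\<in>UNIV. S k l * (\<xi> i l * cnj (\<xi> i k)))"
    unfolding mat_elem_def by (simp add: mult.commute mult.left_commute)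
  also have "\<dots> = (\<Sum>k\<in>UNIV. \<Sum>l\<in>UNIV. S k l * (\<Sum>i\<in>UNIV. \<xi> i l * cnj (\<xi> i k)))"
    by (subst sum.swap, rule sum.cong[OF refl], subst sum.swap) (simp add: sum_distrib_left)
  also have "\<dots> = op_trace S"
    by (simp add: orthonormal_basis_resolution_of_identity[OF on] if_zero_complex_simps op_trace_def)
  finally show ?thesis by simp
qed

text \<open>Fewer than \<open>n\<close> complex linear conditions: as real conditions they are at most
  \<open>2 k < 2 n\<close>, one for \<open>v\<close> and one for \<open>\<i> v\<close>.\<close>
lemma exists_nonzero_orthogonal:
  fixes vs :: "nat \<Rightarrow> 'n::finite \<Rightarrow> complex"
  assumes k: "k < CARD('n)"
  shows "\<exists>x. x \<noteq> (\<lambda>_. 0) \<and> (\<forall>i<k. cinner (vs i) x = 0)"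
proof -
  define S where "S = vec_of ` vs ` {..<k} \<union> vec_of ` (\<lambda>i l. \<i> * vs i l) ` {..<k}"
  have "card S \<le> card (vec_of ` vs ` {..<k}) + card (vec_of ` (\<lambda>i l. \<i> * vs i l) ` {..<k})"
    unfolding S_def by (rule card_Un_le)
  also have "\<dots> \<le> k + k"
    by (intro add_mono order.trans[OF card_image_le] card_image_le[THEN order.trans]) auto
  finally have "dim S < DIM(complex^'n)"
    using dim_le_card'[of S] k by (simp add: S_def)
  then obtain y where y0: "y \<noteq> 0" and y_perp: "\<And>z. z \<in> span S \<Longrightarrow> orthogonal y z"
    using orthogonal_to_subspace_exists by blast
  define x where "x = (\<lambda>l. y $ l)"
  have "x \<noteq> (\<lambda>_. 0)" using y0 by (auto simp: x_def vec_eq_iff)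
  moreover have "cinner (vs i) x = 0" if "i < k" for i
  proof -
    have y: "y = vec_of x" by (simp add: x_def vec_of_def)
    have "y \<bullet> vec_of (vs i) = 0" "y \<bullet> vec_of (\<lambda>l. \<i> * vs i l) = 0"
      using that y_perp by (auto simp: S_def orthogonal_def intro!: span_base)
    then have "Re (cinner (vs i) x) = 0" "Re (cinner (\<lambda>l. \<i> * vs i l) x) = 0"
      unfolding y inner_vec_of[symmetric] by (simp_all add: inner_commute)
    then show ?thesis by (simp add: cinner_scale_left complex_eq_iff)
  qed
  ultimately show ?thesis by blast
qed

subsection \<open>The spectral theorem\<close>

lemma linear_dominated_by_quadratic:
  fixes s c :: real
  assumes "\<And>t. 2 * s * t + c * t\<^sup>2 \<le> 0"
  shows "s = 0"
proof -
  define a where "a = \<bar>c\<bar> + 1"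
  have a: "a > 0" "2 * a + c > 0" by (auto simp: a_def)
  have "a\<^sup>2 * (2 * s * (s / a) + c * (s / a)\<^sup>2) = s\<^sup>2 * (2 * a + c)"
    using a by (simp add: power2_eq_square field_simps)
  moreover have "a\<^sup>2 * (2 * s * (s / a) + c * (s / a)\<^sup>2) \<le> 0"
    using assms[of "s / a"] by (simp add: mult_nonneg_nonpos)
  ultimately have "s\<^sup>2 \<le> 0" using a by (simp add: mult_le_0_iff)
  then show ?thesis by simp
qed

text \<open>If \<open>w\<close> maximises the Rayleigh quotient on an \<open>A\<close>-invariant subspace, the residual
  \<open>r = A w - \<mu> w\<close> lies in the subspace and is orthogonal to \<open>w\<close>; moving from \<open>w\<close> towards \<open>r\<close>
  raises the quotient to first order unless \<open>r = 0\<close>.\<close>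
lemma rayleigh_maximizer_eigenvector:
  fixes A :: "'n::finite cop"
  assumes h: "hermitian A"
    and W_add: "\<And>x y. W x \<Longrightarrow> W y \<Longrightarrow> W (\<lambda>l. x l + y l)"
    and W_scale: "\<And>x c. W x \<Longrightarrow> W (\<lambda>l. c * x l)"
    and W_invariant: "\<And>x. W x \<Longrightarrow> W (mat_vec A x)"
    and Ww: "W w" and ww: "cinner w w = 1"
    and max: "\<And>x. W x \<Longrightarrow> Re (sesq A x x) \<le> Re (sesq A w w) * Re (cinner x x)"
  shows "mat_vec A w = (\<lambda>l. sesq A w w * w l)"
proof -
  define \<mu> where "\<mu> = sesq A w w"
  define r where "r = (\<lambda>l. mat_vec A w l + (- \<mu>) * w l)"
  have Wr: "W r" unfolding r_def by (intro W_add W_scale W_invariant Ww)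
  have wr: "cinner w r = 0"
    unfolding r_def cinner_add_right cinner_scale_right ww
    by (simp add: \<mu>_def sesq_eq_cinner)
  have rw: "cinner r w = 0" using wr cnj_cinner[of w r] by simp
  define s where "s = Re (cinner r r)"
  have rr: "cinner r r = of_real s" by (simp add: s_def flip: cinner_self_eq_Re)
  have Arw: "sesq A r w = of_real s"
  proof -
    have "mat_vec A w = (\<lambda>l. r l + \<mu> * w l)" by (simp add: r_def)
    then show ?thesis by (simp add: sesq_eq_cinner cinner_linear rw rr)
  qed
  have Awr: "sesq A w r = of_real s"
    using sesq_hermitian_swap[OF h, of w r] Arw by simp
  define m where "m = Re \<mu>"
  define q where "q = Re (sesq A r r)"
  have "2 * s * t + (q - m * s) * t\<^sup>2 \<le> 0" for t :: real
  proof -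
    define y where "y = (\<lambda>l. w l + of_real t * r l)"
    have "Re (cinner y y) = 1 + t\<^sup>2 * s"
      by (simp add: y_def cinner_linear ww wr rw rr power2_eq_square)
    moreover have "Re (sesq A y y) = m + 2 * t * s + t\<^sup>2 * q"
      by (simp add: y_def sesq_linear Awr Arw m_def q_def power2_eq_square flip: \<mu>_def)
    moreover have "W y" unfolding y_def by (intro W_add W_scale Ww Wr)
    ultimately have "m + 2 * t * s + t\<^sup>2 * q \<le> m * (1 + t\<^sup>2 * s)"
      using max[of y] by (simp only: m_def \<mu>_def)
    then show ?thesis by (simp add: algebra_simps)
  qed
  then have "s = 0" by (rule linear_dominated_by_quadratic)
  then have "r = (\<lambda>_. 0)" using Re_cinner_self_pos[of r] by (auto simp: s_def)
  then show ?thesis by (auto simp: r_def fun_eq_iff \<mu>_def)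
qed

lemma exists_normalized_multiple:
  assumes "x \<noteq> (\<lambda>_. 0)"
  shows "\<exists>c. cinner (\<lambda>l. c * x l) (\<lambda>l. c * x l) = 1 \<and>
    Re (sesq A (\<lambda>l. c * x l) (\<lambda>l. c * x l)) = Re (sesq A x x) / Re (cinner x x)"
proof -
  define N where "N = Re (cinner x x)"
  have N: "N > 0" using Re_cinner_self_pos[OF assms] by (simp add: N_def)
  define c where "c = complex_of_real (1 / sqrt N)"
  have cc: "cnj c * c = of_real (1 / N)"
    using N by (simp add: c_def flip: of_real_mult)
  have "cinner x x \<noteq> 0" using N by (auto simp: N_def)
  then have "cinner (\<lambda>l. c * x l) (\<lambda>l. c * x l) = 1"
    by (simp add: cinner_linear cc N_def flip: mult.assoc cinner_self_eq_Re)
  moreover have "sesq A (\<lambda>l. c * x l) (\<lambda>l. c * x l) = of_real (1 / N) * sesq A x x"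
    by (simp add: sesq_linear cc flip: mult.assoc)
  ultimately show ?thesis by (auto simp: N_def)
qed

lemma rayleigh_maximizer_exists:
  fixes A :: "'n::finite cop" and vs :: "nat \<Rightarrow> 'n \<Rightarrow> complex"
  assumes k: "k < CARD('n)"
  shows "\<exists>w. (\<forall>i<k. cinner (vs i) w = 0) \<and> cinner w w = 1 \<and>
    (\<forall>x. (\<forall>i<k. cinner (vs i) x = 0) \<longrightarrow> Re (sesq A x x) \<le> Re (sesq A w w) * Re (cinner x x))"
proof -
  define W where "W x \<longleftrightarrow> (\<forall>i<k. cinner (vs i) x = 0)" for x
  define K where "K = {y :: complex^'n. norm y = 1 \<and> W (\<lambda>l. y $ l)}"
  define f where "f y = Re (sesq A (\<lambda>l. y $ l) (\<lambda>l. y $ l))" for y :: "complex^'n"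
  have "closed K"
    unfolding K_def W_def cinner_def
    by (intro closed_Collect_conj closed_Collect_all closed_Collect_imp open_Collect_const
        closed_Collect_eq continuous_intros)
  moreover have "bounded K" unfolding K_def bounded_iff by auto
  ultimately have "compact K" by (simp add: compact_eq_bounded_closed)
  have normalized: "\<exists>y\<in>K. f y = Re (sesq A x x) / Re (cinner x x)"
    if x: "x \<noteq> (\<lambda>_. 0)" and Wx: "W x" for x
  proof -
    obtain c where "cinner (\<lambda>l. c * x l) (\<lambda>l. c * x l) = 1"
      and "Re (sesq A (\<lambda>l. c * x l) (\<lambda>l. c * x l)) = Re (sesq A x x) / Re (cinner x x)"
      using exists_normalized_multiple[OF x] by blast
    moreover have "W (\<lambda>l. c * x l)" using Wx by (simp add: W_def cinner_scale_right)
    ultimately show ?thesis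
      by (intro bexI[of _ "vec_of (\<lambda>l. c * x l)"]) (simp_all add: K_def f_def norm_vec_of_eq_1_iff)
  qed
  obtain x0 where "x0 \<noteq> (\<lambda>_. 0)" "W x0"
    using exists_nonzero_orthogonal[OF k] unfolding W_def by blast
  then have "K \<noteq> {}" using normalized by blast
  moreover have "continuous_on K f"
    unfolding f_def sesq_def by (intro continuous_intros)
  ultimately obtain w0 where w0: "w0 \<in> K" and w0_max: "\<And>y. y \<in> K \<Longrightarrow> f y \<le> f w0"
    using continuous_attains_sup[OF \<open>compact K\<close>] by blast
  define w where "w = (\<lambda>l. w0 $ l)"
  have "vec_of w = w0" by (simp add: w_def vec_of_def)
  then have "W w" "cinner w w = 1"
    using w0 by (simp_all add: K_def w_def flip: norm_vec_of_eq_1_iff)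
  moreover have "Re (sesq A x x) \<le> Re (sesq A w w) * Re (cinner x x)" if "W x" for x
  proof (cases "x = (\<lambda>_. 0)")
    case True
    then show ?thesis by (simp add: sesq_def cinner_def)
  next
    case False
    then have "Re (sesq A x x) / Re (cinner x x) \<le> Re (sesq A w w)"
      using normalized[OF False that] w0_max by (force simp: f_def w_def)
    then show ?thesis using Re_cinner_self_pos[OF False] by (simp add: divide_le_eq)
  qed
  ultimately show ?thesis unfolding W_def by blast
qed

lemma hermitian_eigenvector_orthogonal:
  fixes A :: "'n::finite cop" and vs :: "nat \<Rightarrow> 'n \<Rightarrow> complex"
  assumes h: "hermitian A" and k: "k < CARD('n)"
    and eigen: "\<forall>i<k. mat_vec A (vs i) = (\<lambda>l. sesq A (vs i) (vs i) * vs i l)"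
  shows "\<exists>w. cinner w w = 1 \<and> (\<forall>i<k. cinner (vs i) w = 0) \<and> mat_vec A w = (\<lambda>l. sesq A w w * w l)"
proof -
  define W where "W x \<longleftrightarrow> (\<forall>i<k. cinner (vs i) x = 0)" for x
  have W_invariant: "W (mat_vec A x)" if "W x" for x
  proof -
    have "cinner (vs i) (mat_vec A x) = cnj (sesq A (vs i) (vs i)) * cinner (vs i) x" if "i < k" for i
      using eigen that by (simp add: cinner_mat_vec_hermitian[OF h] cinner_scale_left)
    then show ?thesis using \<open>W x\<close> by (simp add: W_def)
  qed
  obtain w where "W w" "cinner w w = 1"
    and "\<And>x. W x \<Longrightarrow> Re (sesq A x x) \<le> Re (sesq A w w) * Re (cinner x x)"
    using rayleigh_maximizer_exists[OF k, of vs A] unfolding W_def by blast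
  moreover from this have "mat_vec A w = (\<lambda>l. sesq A w w * w l)"
    by (intro rayleigh_maximizer_eigenvector[OF h, of W] W_invariant)
      (auto simp: W_def cinner_linear)
  ultimately show ?thesis unfolding W_def by blast
qed

lemma hermitian_orthonormal_eigenvectors:
  fixes A :: "'n::finite cop"
  assumes h: "hermitian A"
  shows "k \<le> CARD('n) \<Longrightarrow> \<exists>vs. (\<forall>i<k. \<forall>j<k. cinner (vs i) (vs j) = (if i = j then 1 else 0))
     \<and> (\<forall>i<k. mat_vec A (vs i) = (\<lambda>l. sesq A (vs i) (vs i) * vs i l))"
proof (induction k)
  case 0
  then show ?case by simp
next
  case (Suc k)
  then obtain vs where on: "\<forall>i<k. \<forall>j<k. cinner (vs i) (vs j) = (if i = j then 1 else 0)"
    and eigen: "\<forall>i<k. mat_vec A (vs i) = (\<lambda>l. sesq A (vs i) (vs i) * vs i l)"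
    by auto
  obtain w where "cinner w w = 1" and w_perp: "\<forall>i<k. cinner (vs i) w = 0"
    and "mat_vec A w = (\<lambda>l. sesq A w w * w l)"
    using hermitian_eigenvector_orthogonal[OF h _ eigen] Suc.prems by auto
  moreover have "\<forall>i<k. cinner w (vs i) = 0"
    using w_perp cnj_cinner by (metis complex_cnj_zero)
  ultimately show ?case
    using on eigen by (intro exI[of _ "vs(k := w)"]) (auto simp: less_Suc_eq)
qed

theorem hermitian_spectral:
  fixes A :: "'n::finite cop"
  assumes "hermitian A"
  shows "\<exists>\<xi>. orthonormal_basis \<xi> \<and> (\<forall>i. mat_vec A (\<xi> i) = (\<lambda>l. sesq A (\<xi> i) (\<xi> i) * \<xi> i l))"
proof -
  obtain vs where on: "\<forall>i<CARD('n). \<forall>j<CARD('n). cinner (vs i) (vs j) = (if i = j then 1 else 0)"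
    and eigen: "\<forall>i<CARD('n). mat_vec A (vs i) = (\<lambda>l. sesq A (vs i) (vs i) * vs i l)"
    using hermitian_orthonormal_eigenvectors[OF assms, of "CARD('n)"] by auto
  obtain g :: "'n \<Rightarrow> nat" where g: "bij_betw g UNIV {0..<CARD('n)}"
    using ex_bij_betw_finite_nat[of "UNIV :: 'n set"] by auto
  then have "g i < CARD('n)" "g i = g j \<longleftrightarrow> i = j" for i j
    by (auto simp: bij_betw_def inj_on_def)
  then show ?thesis using on eigen
    by (intro exI[of _ "\<lambda>i. vs (g i)"]) (auto simp: orthonormal_basis_def)
qed

lemma eigenbasis_iff:
  "is_eigenbasis S \<xi> \<longleftrightarrow>
    orthonormal_basis \<xi> \<and> (\<forall>i. mat_vec S (\<xi> i) = (\<lambda>l. sesq S (\<xi> i) (\<xi> i) * \<xi> i l))"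
proof
  assume eb: "is_eigenbasis S \<xi>"
  then have on: "orthonormal_basis \<xi>" by (simp add: is_eigenbasis_def)
  have "mat_vec S (\<xi> i) = (\<lambda>l. sesq S (\<xi> i) (\<xi> i) * \<xi> i l)" for i
  proof -
    obtain c where "mat_vec S (\<xi> i) = (\<lambda>l. c * \<xi> i l)"
      using eb unfolding is_eigenbasis_def mat_vec_def by fast
    moreover from this have "sesq S (\<xi> i) (\<xi> i) = c"
      using on by (simp add: sesq_eq_cinner cinner_scale_right orthonormal_basis_def)
    ultimately show ?thesis by simp
  qed
  with on show "orthonormal_basis \<xi> \<and> (\<forall>i. mat_vec S (\<xi> i) = (\<lambda>l. sesq S (\<xi> i) (\<xi> i) * \<xi> i l))"
    by blast
next
  assume "orthonormal_basis \<xi> \<and> (\<forall>i. mat_vec S (\<xi> i) = (\<lambda>l. sesq S (\<xi> i) (\<xi> i) * \<xi> i l))"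
  then show "is_eigenbasis S \<xi>"
    unfolding is_eigenbasis_def by (metis mat_vec_def)
qed

lemma psd_spectral:
  fixes M :: "'n::finite cop"
  assumes "psd M"
  shows "\<exists>u \<mu>. orthonormal_basis u \<and> (\<forall>m. 0 \<le> \<mu> m) \<and>
     M = (\<lambda>a a'. \<Sum>m\<in>UNIV. complex_of_real (\<mu> m) * ketbra (u m) a a')"
proof -
  obtain u where on: "orthonormal_basis u"
    and eigen: "\<And>m. mat_vec M (u m) = (\<lambda>l. sesq M (u m) (u m) * u m l)"
    using hermitian_spectral[OF psd_hermitian[OF assms]] by blast
  define \<mu> where "\<mu> m = Re (sesq M (u m) (u m))" for m
  have \<mu>: "sesq M (u m) (u m) = of_real (\<mu> m)" "0 \<le> \<mu> m" for m
    using psd_sesq_self[OF assms, of "u m"] by (simp_all add: \<mu>_def complex_eq_iff)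
  have "M a a' = (\<Sum>m\<in>UNIV. complex_of_real (\<mu> m) * ketbra (u m) a a')" for a a'
  proof -
    have "(\<Sum>m\<in>UNIV. complex_of_real (\<mu> m) * ketbra (u m) a a')
        = (\<Sum>m\<in>UNIV. mat_vec M (u m) a * cnj (u m a'))"
      by (simp add: eigen \<mu>(1) ketbra_def mult.assoc)
    also have "\<dots> = (\<Sum>m\<in>UNIV. \<Sum>l\<in>UNIV. M a l * (u m l * cnj (u m a')))"
      by (simp add: mat_vec_def sum_distrib_right mult.assoc)
    also have "\<dots> = (\<Sum>l\<in>UNIV. M a l * (\<Sum>m\<in>UNIV. u m l * cnj (u m a')))"
      by (subst sum.swap) (simp add: sum_distrib_left)
    also have "\<dots> = M a a'"
      by (simp add: orthonormal_basis_resolution_of_identity[OF on] if_zero_complex_simps)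
    finally show ?thesis by simp
  qed
  then have "M = (\<lambda>a a'. \<Sum>m\<in>UNIV. complex_of_real (\<mu> m) * ketbra (u m) a a')"
    by (intro ext)
  then show ?thesis using on \<mu>(2) by blast
qed

section \<open>Steered states\<close>

lemma sum_UNIV_product:
  "(\<Sum>p\<in>(UNIV::('a::finite \<times> 'b::finite) set). f p) = (\<Sum>a\<in>UNIV. \<Sum>k\<in>UNIV. f (a, k))"
  by (simp add: sum.cartesian_product)

definition tensor_vec :: "('a \<Rightarrow> complex) \<Rightarrow> ('b \<Rightarrow> complex) \<Rightarrow> ('a \<times> 'b \<Rightarrow> complex)" where
  "tensor_vec v x = (\<lambda>p. v (fst p) * x (snd p))"

text \<open>The operator \<open>\<langle>x|\<rho>|y\<rangle>\<close> on Alice's space.\<close>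
definition partial_elem ::
  "('a::finite \<times> 'b::finite) cop \<Rightarrow> ('b \<Rightarrow> complex) \<Rightarrow> ('b \<Rightarrow> complex) \<Rightarrow> 'a cop" where
  "partial_elem \<rho> x y = (\<lambda>a a'. \<Sum>k\<in>UNIV. \<Sum>l\<in>UNIV. cnj (x k) * \<rho> (a, k) (a', l) * y l)"

lemma sesq_partial_elem:
  "sesq (partial_elem \<rho> x y) v w = sesq \<rho> (tensor_vec v x) (tensor_vec w y)"
proof -
  have "sesq \<rho> (tensor_vec v x) (tensor_vec w y) = (\<Sum>a\<in>UNIV. \<Sum>k\<in>UNIV. \<Sum>a'\<in>UNIV. \<Sum>l\<in>UNIV.
      cnj (v a) * (cnj (x k) * \<rho> (a, k) (a', l) * y l) * w a')"
    unfolding sesq_def sum_UNIV_product tensor_vec_def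
    by (intro sum.cong refl) (simp add: algebra_simps)
  also have "\<dots> = (\<Sum>a\<in>UNIV. \<Sum>a'\<in>UNIV. \<Sum>k\<in>UNIV. \<Sum>l\<in>UNIV.
      cnj (v a) * (cnj (x k) * \<rho> (a, k) (a', l) * y l) * w a')"
    by (intro sum.cong refl) (rule sum.swap)
  also have "\<dots> = sesq (partial_elem \<rho> x y) v w"
    unfolding sesq_def partial_elem_def by (simp add: sum_distrib_left sum_distrib_right)
  finally show ?thesis by simp
qed

lemma psd_partial_elem: "psd \<rho> \<Longrightarrow> psd (partial_elem \<rho> x x)"
  unfolding psd_def quad_form_eq_sesq sesq_partial_elem by (simp add: flip: quad_form_eq_sesq)

lemma steered_unnorm_apply:
  "steered_unnorm \<rho> M k l = (\<Sum>a\<in>UNIV. \<Sum>a'\<in>UNIV. M a a' * \<rho> (a', k) (a, l))"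
  unfolding steered_unnorm_def ptrace_A_def op_mult_def sum_UNIV_product
  by (simp add: tensor_def op_id_def if_zero_complex_simps sum.delta)

lemma sesq_steered_unnorm:
  "sesq (steered_unnorm \<rho> M) x y = op_trace (op_mult M (partial_elem \<rho> x y))"
proof -
  have "sesq (steered_unnorm \<rho> M) x y =
      (\<Sum>k\<in>UNIV. \<Sum>l\<in>UNIV. \<Sum>a\<in>UNIV. \<Sum>a'\<in>UNIV. M a a' * (cnj (x k) * \<rho> (a', k) (a, l) * y l))"
    unfolding sesq_def steered_unnorm_apply by (simp add: sum_distrib_left sum_distrib_right algebra_simps)
  also have "\<dots> = (\<Sum>a\<in>UNIV. \<Sum>a'\<in>UNIV. \<Sum>k\<in>UNIV. \<Sum>l\<in>UNIV. M a a' * (cnj (x k) * \<rho> (a', k) (a, l) * y l))"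
    by (subst (2) sum.swap, subst sum.swap, subst (3) sum.swap, subst (2) sum.swap) (rule refl)
  also have "\<dots> = op_trace (op_mult M (partial_elem \<rho> x y))"
    by (simp add: op_trace_def op_mult_def partial_elem_def sum_distrib_left)
  finally show ?thesis .
qed

lemma mat_elem_eq_sesq: "mat_elem \<xi> S i j = sesq S (\<xi> i) (\<xi> j)"
  by (simp add: mat_elem_def sesq_def)

lemma trace_mult_ketbra: "op_trace (op_mult (ketbra v) P) = sesq P v v"
  unfolding op_trace_def op_mult_def ketbra_def sesq_def
  by (subst sum.swap) (simp add: sum_distrib_left ac_simps)

lemma trace_mult_scaled_sum:
  "op_trace (op_mult (\<lambda>a b. \<Sum>m\<in>I. c m * K m a b) P) = (\<Sum>m\<in>I. c m * op_trace (op_mult (K m) P))"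
  unfolding op_trace_def op_mult_def
  by (simp add: sum_distrib_left sum_distrib_right ac_simps) (subst sum.swap, subst (2) sum.swap, rule refl)

lemma psd_steered_unnorm:
  assumes "psd \<rho>" "psd M"
  shows "psd (steered_unnorm \<rho> M)"
  unfolding psd_def
proof
  fix y
  obtain u \<mu> where "orthonormal_basis u" and \<mu>: "\<forall>m. 0 \<le> \<mu> m"
    and M: "M = (\<lambda>a a'. \<Sum>m\<in>UNIV. complex_of_real (\<mu> m) * ketbra (u m) a a')"
    using psd_spectral[OF assms(2)] by blast
  define q where "q m = Re (quad_form (partial_elem \<rho> y y) (u m))" for m
  have q: "quad_form (partial_elem \<rho> y y) (u m) = of_real (q m)" "0 \<le> q m" for m
    using psd_partial_elem[OF assms(1), of y] unfolding psd_def q_def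
    by (simp_all add: complex_eq_iff complex_is_Real_iff)
  have "quad_form (steered_unnorm \<rho> M) y =
      (\<Sum>m\<in>UNIV. complex_of_real (\<mu> m) * op_trace (op_mult (ketbra (u m)) (partial_elem \<rho> y y)))"
    unfolding quad_form_eq_sesq sesq_steered_unnorm M by (rule trace_mult_scaled_sum)
  also have "\<dots> = of_real (\<Sum>m\<in>UNIV. \<mu> m * q m)"
    by (simp add: trace_mult_ketbra q(1) flip: quad_form_eq_sesq)
  finally show "quad_form (steered_unnorm \<rho> M) y \<in> \<real> \<and> 0 \<le> Re (quad_form (steered_unnorm \<rho> M) y)"
    using \<mu> q(2) by (simp add: sum_nonneg)
qed

lemma psd_diagonal: "psd S \<Longrightarrow> 0 \<le> Re (S k k) \<and> Im (S k k) = 0"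
  using psd_sesq_self[of S "unit_vec k"] by (simp add: sesq_unit_vec)

lemma psd_trace_nonneg: "psd S \<Longrightarrow> 0 \<le> Re (op_trace S)"
  unfolding op_trace_def Re_sum by (intro sum_nonneg) (simp add: psd_diagonal)

definition l1_coherence :: "('n::finite \<Rightarrow> 'n \<Rightarrow> complex) \<Rightarrow> 'n cop \<Rightarrow> real" where
  "l1_coherence \<xi> S = (\<Sum>i\<in>UNIV. \<Sum>j\<in>UNIV. if i \<noteq> j then cmod (mat_elem \<xi> S i j) else 0)"

lemma l1_coherence_nonneg: "0 \<le> l1_coherence \<xi> S"
  unfolding l1_coherence_def by (intro sum_nonneg) auto

lemma mat_elem_le_l1_coherence:
  assumes "i \<noteq> j"
  shows "cmod (mat_elem \<xi> S i j) \<le> l1_coherence \<xi> S"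
proof -
  let ?f = "\<lambda>i j. if i \<noteq> j then cmod (mat_elem \<xi> S i j) else 0"
  have "?f i j \<le> (\<Sum>j'\<in>UNIV. ?f i j')" by (rule member_le_sum) auto
  also have "\<dots> \<le> (\<Sum>i'\<in>UNIV. \<Sum>j'\<in>UNIV. ?f i' j')"
    by (rule member_le_sum[where f="\<lambda>i'. \<Sum>j'\<in>UNIV. ?f i' j'"]) (auto intro: sum_nonneg)
  finally show ?thesis using assms by (simp add: l1_coherence_def)
qed

lemma sum_pair_average:
  fixes x :: "'n::finite \<Rightarrow> real"
  shows "(\<Sum>i\<in>UNIV. \<Sum>j\<in>UNIV. (x i + x j) / 2) = real CARD('n) * (\<Sum>i\<in>UNIV. x i)"
proof -
  have "(\<Sum>i\<in>UNIV. \<Sum>j\<in>UNIV. (x i + x j) / 2) =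
      (\<Sum>i\<in>UNIV. \<Sum>j\<in>(UNIV::'n set). x i / 2) + (\<Sum>i\<in>(UNIV::'n set). \<Sum>j\<in>UNIV. x j / 2)"
    by (simp add: add_divide_distrib sum.distrib)
  also have "\<dots> = real CARD('n) * (\<Sum>i\<in>UNIV. x i)"
    by (simp add: sum_distrib_left flip: sum_divide_distrib)
  finally show ?thesis .
qed

text \<open>Each \<open>|S\<^sub>i\<^sub>j|\<close> is at most \<open>(S\<^sub>i\<^sub>i + S\<^sub>j\<^sub>j) / 2\<close>.\<close>
lemma psd_l1_coherence_le_trace:
  fixes S :: "'n::finite cop"
  assumes S: "psd S" and on: "orthonormal_basis \<xi>"
  shows "l1_coherence \<xi> S \<le> real CARD('n) * Re (op_trace S)"
proof -
  define D where "D i = Re (sesq S (\<xi> i) (\<xi> i))" for i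
  have "l1_coherence \<xi> S \<le> (\<Sum>i\<in>UNIV. \<Sum>j\<in>UNIV. cmod (mat_elem \<xi> S i j))"
    unfolding l1_coherence_def by (intro sum_mono) auto
  also have "\<dots> \<le> (\<Sum>i\<in>UNIV. \<Sum>j\<in>(UNIV::'n set). (D i + D j) / 2)"
  proof (intro sum_mono)
    fix i j
    show "cmod (mat_elem \<xi> S i j) \<le> (D i + D j) / 2"
      using psd_sesq_amgm[OF S, of "\<xi> i" "\<xi> j"] by (simp add: D_def mat_elem_eq_sesq)
  qed
  also have "\<dots> = real CARD('n) * Re (op_trace S)"
    by (simp add: sum_pair_average D_def trace_eq_sum_mat_elem[OF on] mat_elem_eq_sesq Re_sum)
  finally show ?thesis .
qed

lemma prob_M_eq_trace: "prob_M \<rho> M = Re (op_trace (steered_unnorm \<rho> M))"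
  unfolding prob_M_def op_trace_def steered_unnorm_def ptrace_A_def sum_UNIV_product
  by (subst sum.swap) (rule refl)

lemma prob_M_nonneg: "psd \<rho> \<Longrightarrow> psd M \<Longrightarrow> 0 \<le> prob_M \<rho> M"
  by (simp add: prob_M_eq_trace psd_trace_nonneg psd_steered_unnorm)

lemma prob_M_diff: "prob_M \<rho> (\<lambda>a a'. X a a' - Y a a') = prob_M \<rho> X - prob_M \<rho> Y"
  by (simp add: prob_M_eq_trace op_trace_def steered_unnorm_apply left_diff_distrib sum_subtractf)

lemma prob_M_op_id: "prob_M \<rho> op_id = Re (op_trace \<rho>)"
proof -
  have "tensor (op_id :: 'a cop) (op_id :: 'b cop) = op_id"
    by (auto simp: tensor_def op_id_def fun_eq_iff)
  then show ?thesis
    by (simp add: prob_M_def op_mult_def op_id_def if_zero_complex_simps sum.delta)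
qed

lemma prob_M_le_1:
  assumes "is_state \<rho>" "povm_elem M"
  shows "prob_M \<rho> M \<le> 1"
proof -
  have "0 \<le> prob_M \<rho> (\<lambda>a a'. op_id a a' - M a a')"
    using assms by (intro prob_M_nonneg) (simp_all add: is_state_def povm_elem_def)
  then show ?thesis using assms(1) by (simp add: prob_M_diff prob_M_op_id is_state_def)
qed

lemma steered_coherence_eq: "steered_coherence \<rho> \<xi> M = l1_coherence \<xi> (steered_unnorm \<rho> M) / prob_M \<rho> M"
  by (simp add: steered_coherence_def l1_coherence_def)

definition steered_coherence_sup :: "('a::finite \<times> 'b::finite) cop \<Rightarrow> ('b \<Rightarrow> 'b \<Rightarrow> complex) \<Rightarrow> real" where
  "steered_coherence_sup \<rho> \<xi> = (SUP M \<in> {M. povm_elem M \<and> prob_M \<rho> M > 0}. steered_coherence \<rho> \<xi> M)"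

lemma max_steered_coherence_eq_Inf:
  "max_steered_coherence \<rho> = Inf {steered_coherence_sup \<rho> \<xi> | \<xi>. is_eigenbasis (ptrace_A \<rho>) \<xi>}"
  by (simp add: max_steered_coherence_def steered_coherence_sup_def)

text \<open>Measurements with \<open>p\<^sub>M = 0\<close> are excluded from the supremum but steer nothing, and
  \<open>p\<^sub>M \<le> 1\<close> makes dividing by \<open>p\<^sub>M\<close> harmless, so every POVM element's unnormalised steered
  coherence is below the supremum.\<close>
lemma steered_coherence_sup_bounds:
  fixes \<rho> :: "('a::finite \<times> 'b::finite) cop"
  assumes st: "is_state \<rho>" and on: "orthonormal_basis \<xi>"
  shows "0 \<le> steered_coherence_sup \<rho> \<xi>"
    and "\<And>M. povm_elem M \<Longrightarrow> l1_coherence \<xi> (steered_unnorm \<rho> M) \<le> steered_coherence_sup \<rho> \<xi>"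
proof -
  have \<rho>: "psd \<rho>" using st by (simp add: is_state_def)
  define S where "S = {M :: 'a cop. povm_elem M \<and> prob_M \<rho> M > 0}"
  have l1_le: "l1_coherence \<xi> (steered_unnorm \<rho> M) \<le> real CARD('b) * prob_M \<rho> M" if "psd M" for M
    using psd_l1_coherence_le_trace[OF psd_steered_unnorm[OF \<rho> that] on] by (simp add: prob_M_eq_trace)
  have op_id_S: "op_id \<in> S"
    using st by (simp add: S_def povm_elem_op_id prob_M_op_id is_state_def)
  have bounds: "0 \<le> steered_coherence \<rho> \<xi> M \<and> steered_coherence \<rho> \<xi> M \<le> real CARD('b)" if "M \<in> S" for M
    using that l1_le l1_coherence_nonneg
    by (auto simp: S_def povm_elem_def steered_coherence_eq divide_le_eq zero_le_divide_iff)
  then have "bdd_above (steered_coherence \<rho> \<xi> ` S)"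
    by (intro bdd_aboveI2[where M="real CARD('b)"]) auto
  then have upper: "steered_coherence \<rho> \<xi> M \<le> steered_coherence_sup \<rho> \<xi>" if "M \<in> S" for M
    unfolding steered_coherence_sup_def S_def[symmetric] by (rule cSUP_upper[OF that])
  show nonneg: "0 \<le> steered_coherence_sup \<rho> \<xi>"
    using upper[OF op_id_S] bounds[OF op_id_S] by linarith
  show "l1_coherence \<xi> (steered_unnorm \<rho> M) \<le> steered_coherence_sup \<rho> \<xi>" if M: "povm_elem M" for M
  proof (cases "prob_M \<rho> M > 0")
    case True
    have "l1_coherence \<xi> (steered_unnorm \<rho> M) \<le> l1_coherence \<xi> (steered_unnorm \<rho> M) / prob_M \<rho> M"
      using True prob_M_le_1[OF st M] l1_coherence_nonneg[of \<xi> "steered_unnorm \<rho> M"]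
      by (simp add: le_divide_eq mult_left_le)
    also have "\<dots> \<le> steered_coherence_sup \<rho> \<xi>"
      using upper True M by (simp add: S_def steered_coherence_eq)
    finally show ?thesis .
  next
    case False
    then have "prob_M \<rho> M = 0"
      using prob_M_nonneg[OF \<rho>] M by (force simp: povm_elem_def)
    moreover have "psd M" using M by (simp add: povm_elem_def)
    ultimately show ?thesis using l1_le[of M] nonneg by simp
  qed
qed

lemma quad_form_ketbra: "quad_form (ketbra v) w = of_real ((cmod (cinner v w))\<^sup>2)"
proof -
  have "quad_form (ketbra v) w = cinner w v * cinner v w"
    unfolding quad_form_def ketbra_def cinner_def sum_product
    by (simp add: sum_distrib_left algebra_simps)
  also have "cinner w v = cnj (cinner v w)" by (simp add: cnj_cinner)
  finally show ?thesis by (simp add: cnj_mult_self)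
qed

lemma quad_form_diff: "quad_form (\<lambda>i j. A i j - B i j) v = quad_form A v - quad_form B v"
  by (simp add: quad_form_def algebra_simps sum_subtractf)

lemma quad_form_op_id: "quad_form op_id v = cinner v v"
  by (simp add: quad_form_def cinner_def op_id_def if_zero_complex_simps sum.delta)

lemma povm_elem_quarter_ketbra:
  assumes "Re (cinner v v) \<le> 4"
  shows "povm_elem (\<lambda>a b. ketbra v a b / 4)"
proof -
  have quad: "quad_form (\<lambda>a b. ketbra v a b / 4) w = of_real ((cmod (cinner v w))\<^sup>2 / 4)" for w
  proof -
    have "quad_form (\<lambda>a b. ketbra v a b / 4) w = quad_form (ketbra v) w / 4"
      by (simp add: quad_form_def sum_divide_distrib)
    then show ?thesis by (simp add: quad_form_ketbra)
  qed
  have "(cmod (cinner v w))\<^sup>2 / 4 \<le> Re (cinner w w)" for w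
  proof -
    have "(cmod (cinner v w))\<^sup>2 \<le> Re (cinner v v) * Re (cinner w w)"
      by (rule cinner_Cauchy_Schwarz)
    also have "\<dots> \<le> 4 * Re (cinner w w)"
      by (rule mult_right_mono[OF assms Re_cinner_self_nonneg])
    finally show ?thesis by simp
  qed
  moreover have "quad_form (\<lambda>a b. op_id a b - ketbra v a b / 4) w =
      of_real (Re (cinner w w) - (cmod (cinner v w))\<^sup>2 / 4)" for w
    by (simp add: quad_form_diff quad_form_op_id quad complex_eq_iff Im_cinner_self)
  ultimately show ?thesis
    unfolding povm_elem_def psd_def by (simp add: quad)
qed

lemma norm_unit_vec_plus_phase:
  assumes "cmod z = 1"
  shows "Re (cinner (\<lambda>t. unit_vec a t + z * unit_vec b t) (\<lambda>t. unit_vec a t + z * unit_vec b t)) \<le> 4"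
proof -
  let ?v = "\<lambda>t. unit_vec a t + z * unit_vec b t :: complex"
  have "norm (vec_of ?v) \<le> norm (vec_of (unit_vec a)) + norm (vec_of (\<lambda>t. z * unit_vec b t))"
    unfolding vec_of_add by (rule norm_triangle_ineq)
  also have "\<dots> = 2" using assms by (simp add: norm_vec_of_scale norm_vec_of_unit_vec)
  finally have "(norm (vec_of ?v))\<^sup>2 \<le> 2\<^sup>2" by (intro power_mono) auto
  then show ?thesis by (simp add: norm_vec_of_square)
qed

text \<open>Steering with \<open>M = |e\<^sub>a + z e\<^sub>b\<rangle>\<langle>e\<^sub>a + z e\<^sub>b| / 4\<close> for the four phases \<open>z\<close> and polarising
  recovers every entry of the off-diagonal block \<open>\<langle>\<xi>\<^sub>i|\<rho>|\<xi>\<^sub>j\<rangle>\<close>.\<close>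
lemma partial_elem_le_steered_coherence_sup:
  fixes \<rho> :: "('a::finite \<times> 'b::finite) cop"
  assumes st: "is_state \<rho>" and on: "orthonormal_basis \<xi>" and ij: "i \<noteq> j"
  shows "cmod (partial_elem \<rho> (\<xi> i) (\<xi> j) a b) \<le> 4 * steered_coherence_sup \<rho> \<xi>"
proof -
  define P where "P = partial_elem \<rho> (\<xi> i) (\<xi> j)"
  define Q where "Q z = sesq P (\<lambda>t. unit_vec a t + z * unit_vec b t) (\<lambda>t. unit_vec a t + z * unit_vec b t)"
    for z
  have Q_bound: "cmod (Q z) \<le> 4 * steered_coherence_sup \<rho> \<xi>" if "cmod z = 1" for z
  proof -
    define v where "v = (\<lambda>t. unit_vec a t + z * unit_vec b t)"
    define M where "M = (\<lambda>a b. ketbra v a b / 4)"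
    have "mat_elem \<xi> (steered_unnorm \<rho> M) i j = op_trace (op_mult M P)"
      by (simp add: mat_elem_eq_sesq sesq_steered_unnorm P_def)
    also have "\<dots> = op_trace (op_mult (ketbra v) P) / 4"
      by (simp add: M_def op_trace_def op_mult_def sum_divide_distrib)
    also have "\<dots> = Q z / 4"
      by (simp add: trace_mult_ketbra Q_def v_def)
    finally have "mat_elem \<xi> (steered_unnorm \<rho> M) i j = Q z / 4" .
    moreover have "povm_elem M"
      unfolding M_def v_def by (intro povm_elem_quarter_ketbra norm_unit_vec_plus_phase that)
    ultimately have "cmod (Q z / 4) \<le> steered_coherence_sup \<rho> \<xi>"
      using mat_elem_le_l1_coherence[OF ij] steered_coherence_sup_bounds(2)[OF st on]
      by (metis order_trans)
    then show ?thesis by (simp add: norm_divide)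
  qed
  have "4 * P a b = Q 1 - Q (-1) - \<i> * Q \<i> + \<i> * Q (-\<i>)"
    unfolding Q_def by (simp add: sesq_polarization flip: sesq_unit_vec)
  then have "4 * cmod (P a b) = cmod (Q 1 - Q (-1) - \<i> * Q \<i> + \<i> * Q (-\<i>))"
    by (metis norm_mult norm_numeral)
  also have "\<dots> \<le> cmod (Q 1) + cmod (Q (-1)) + cmod (Q \<i>) + cmod (Q (-\<i>))"
    using norm_triangle_ineq[of "Q 1 - Q (-1) - \<i> * Q \<i>" "\<i> * Q (-\<i>)"]
      norm_triangle_ineq4[of "Q 1 - Q (-1)" "\<i> * Q \<i>"] norm_triangle_ineq4[of "Q 1" "Q (-1)"]
    by (simp add: norm_mult)
  also have "\<dots> \<le> 4 * (4 * steered_coherence_sup \<rho> \<xi>)"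
    using Q_bound[of 1] Q_bound[of "-1"] Q_bound[of \<i>] Q_bound[of "-\<i>"] by simp
  finally show ?thesis by (simp add: P_def)
qed

section \<open>Classical-quantum states\<close>

lemma op_trace_sum: "op_trace (\<lambda>x y. \<Sum>i\<in>I. f i x y) = (\<Sum>i\<in>I. op_trace (f i))"
  unfolding op_trace_def by (rule sum.swap)

lemma op_trace_tensor: "op_trace (tensor A B) = op_trace A * op_trace B"
  by (simp add: op_trace_def tensor_def sum_UNIV_product sum_product)

lemma op_trace_ketbra: "op_trace (ketbra v) = cinner v v"
  by (simp add: op_trace_def ketbra_def cinner_def mult.commute)

lemma ptrace_A_tensor: "ptrace_A (tensor A B) = (\<lambda>k l. op_trace A * B k l)"
  by (simp add: ptrace_A_def tensor_def op_trace_def sum_distrib_right)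

lemma partial_elem_tensor_ketbra:
  "partial_elem (tensor A (ketbra v)) x y = (\<lambda>a b. cinner x v * cinner v y * A a b)"
  unfolding partial_elem_def tensor_def ketbra_def cinner_def
  by (simp add: sum_product sum_distrib_left ac_simps) (intro ext, rule sum.swap)

lemma partial_elem_sum:
  "partial_elem (\<lambda>p q. \<Sum>i\<in>I. c i * R i p q) x y = (\<lambda>a b. \<Sum>i\<in>I. c i * partial_elem (R i) x y a b)"
  unfolding partial_elem_def
  by (simp add: sum_distrib_left sum_distrib_right ac_simps) (subst sum.swap, subst (2) sum.swap, rule refl)

lemma ptrace_A_sum:
  "ptrace_A (\<lambda>p q. \<Sum>i\<in>I. c i * R i p q) = (\<lambda>k l. \<Sum>i\<in>I. c i * ptrace_A (R i) k l)"
  unfolding ptrace_A_def by (simp add: sum_distrib_left) (subst sum.swap, rule refl)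

context
  fixes \<rho> :: "('a::finite \<times> 'b::finite) cop" and \<xi> :: "'b \<Rightarrow> 'b \<Rightarrow> complex"
    and p :: "'b \<Rightarrow> real" and \<rho>A :: "'b \<Rightarrow> 'a cop"
  assumes on: "orthonormal_basis \<xi>"
    and cq: "\<rho> = (\<lambda>x y. \<Sum>i\<in>UNIV. complex_of_real (p i) * tensor (\<rho>A i) (ketbra (\<xi> i)) x y)"
begin

lemma classical_quantum_partial_elem:
  "partial_elem \<rho> (\<xi> i) (\<xi> j) = (if i = j then (\<lambda>a b. complex_of_real (p i) * \<rho>A i a b) else (\<lambda>_ _. 0))"
  using on unfolding cq partial_elem_sum partial_elem_tensor_ketbra orthonormal_basis_def
  by (auto simp: if_zero_complex_simps sum.delta fun_eq_iff)

lemma classical_quantum_eigenbasis: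
  assumes "\<forall>i. is_state (\<rho>A i)"
  shows "is_eigenbasis (ptrace_A \<rho>) \<xi>"
proof -
  have S: "ptrace_A \<rho> = (\<lambda>k l. \<Sum>m\<in>UNIV. complex_of_real (p m) * ketbra (\<xi> m) k l)"
    using assms unfolding cq ptrace_A_sum ptrace_A_tensor by (simp add: is_state_def)
  have "(\<Sum>l\<in>UNIV. ptrace_A \<rho> k l * \<xi> i l) = complex_of_real (p i) * \<xi> i k" for i k
  proof -
    have "(\<Sum>l\<in>UNIV. ptrace_A \<rho> k l * \<xi> i l) =
        (\<Sum>l\<in>UNIV. \<Sum>m\<in>UNIV. complex_of_real (p m) * \<xi> m k * (cnj (\<xi> m l) * \<xi> i l))"
      by (simp add: S ketbra_def sum_distrib_left sum_distrib_right ac_simps)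
    also have "\<dots> = (\<Sum>m\<in>UNIV. complex_of_real (p m) * \<xi> m k * cinner (\<xi> m) (\<xi> i))"
      by (subst sum.swap) (simp add: cinner_def sum_distrib_left)
    also have "\<dots> = complex_of_real (p i) * \<xi> i k"
      using on by (simp add: orthonormal_basis_def if_zero_complex_simps sum.delta)
    finally show ?thesis .
  qed
  then show ?thesis using on unfolding is_eigenbasis_def by blast
qed

lemma classical_quantum_max_steered_coherence:
  assumes st: "is_state \<rho>" and states: "\<forall>i. is_state (\<rho>A i)"
  shows "max_steered_coherence \<rho> = 0"
proof -
  have "mat_elem \<xi> (steered_unnorm \<rho> M) i j = 0" if "i \<noteq> j" for M i j
    using that by (simp add: mat_elem_eq_sesq sesq_steered_unnorm classical_quantum_partial_elem
        op_trace_def op_mult_def)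
  then have "l1_coherence \<xi> (steered_unnorm \<rho> M) = 0" for M
    by (simp add: l1_coherence_def cong: if_cong)
  then have "steered_coherence \<rho> \<xi> M = 0" for M
    by (simp add: steered_coherence_eq)
  moreover have "op_id \<in> {M. povm_elem M \<and> prob_M \<rho> M > 0}"
    using st by (simp add: povm_elem_op_id prob_M_op_id is_state_def)
  ultimately have "steered_coherence_sup \<rho> \<xi> = 0"
    unfolding steered_coherence_sup_def by (metis (no_types, lifting) SUP_cong cSUP_const empty_iff)
  then show ?thesis
    unfolding max_steered_coherence_eq_Inf
    using classical_quantum_eigenbasis[OF states] steered_coherence_sup_bounds(1)[OF st]
    by (intro cInf_eq_minimum) (auto simp: is_eigenbasis_def)
qed

end

lemma is_state_ketbra: "cinner v v = 1 \<Longrightarrow> is_state (ketbra v)"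
  by (simp add: is_state_def psd_def quad_form_ketbra op_trace_ketbra)

lemma psd_eq_scaled_state:
  fixes R :: "'n::finite cop"
  assumes "psd R"
  shows "\<exists>p \<sigma>. 0 \<le> p \<and> is_state \<sigma> \<and> R = (\<lambda>a b. complex_of_real p * \<sigma> a b)"
proof -
  define p where "p = Re (op_trace R)"
  have trace: "op_trace R = of_real p"
    using psd_diagonal[OF assms] by (simp add: p_def op_trace_def complex_eq_iff Im_sum)
  have "0 \<le> p" using psd_trace_nonneg[OF assms] by (simp add: p_def)
  show ?thesis
  proof (cases "p = 0")
    case True
    have "R a a = 0" for a
      using psd_diagonal[OF assms] True
      by (simp add: p_def op_trace_def Re_sum sum_nonneg_eq_0_iff complex_eq_iff)
    then have "R = (\<lambda>a b. complex_of_real 0 * ketbra (unit_vec undefined) a b)"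
      using psd_zero_diagonal[OF assms] by auto
    moreover have "is_state (ketbra (unit_vec (undefined :: 'n)))"
      by (rule is_state_ketbra) (simp add: cinner_def unit_vec_def if_zero_complex_simps sum.delta)
    ultimately show ?thesis by blast
  next
    case False
    define \<sigma> where "\<sigma> = (\<lambda>a b. R a b / of_real p)"
    have "psd \<sigma>"
    proof -
      have "quad_form \<sigma> v = quad_form R v / of_real p" for v
        by (simp add: \<sigma>_def quad_form_def sum_divide_distrib)
      then show ?thesis
        using assms \<open>0 \<le> p\<close> by (simp add: psd_def complex_is_Real_iff)
    qed
    moreover have "op_trace \<sigma> = 1"
      using False trace by (simp add: \<sigma>_def op_trace_def flip: sum_divide_distrib)
    moreover have "R = (\<lambda>a b. complex_of_real p * \<sigma> a b)"
      using False by (simp add: \<sigma>_def)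
    ultimately show ?thesis using \<open>0 \<le> p\<close> by (auto simp: is_state_def)
  qed
qed

lemma matrix_basis_expansion:
  fixes T :: "'n::finite cop"
  assumes on: "orthonormal_basis \<xi>"
  shows "T k l = (\<Sum>i\<in>UNIV. \<Sum>j\<in>UNIV. mat_elem \<xi> T i j * (\<xi> i k * cnj (\<xi> j l)))"
proof -
  have "(\<Sum>i\<in>UNIV. \<Sum>j\<in>UNIV. mat_elem \<xi> T i j * (\<xi> i k * cnj (\<xi> j l))) =
      (\<Sum>i\<in>UNIV. \<Sum>j\<in>UNIV. \<Sum>k'\<in>UNIV. \<Sum>l'\<in>UNIV.
        T k' l' * ((\<xi> i k * cnj (\<xi> i k')) * (\<xi> j l' * cnj (\<xi> j l))))"
    unfolding mat_elem_def sum_distrib_right by (simp add: ac_simps)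
  also have "\<dots> = (\<Sum>k'\<in>UNIV. \<Sum>l'\<in>UNIV. \<Sum>i\<in>UNIV. \<Sum>j\<in>UNIV.
        T k' l' * ((\<xi> i k * cnj (\<xi> i k')) * (\<xi> j l' * cnj (\<xi> j l))))"
    by (subst (2) sum.swap, subst sum.swap, subst (3) sum.swap, subst (2) sum.swap) (rule refl)
  also have "\<dots> = (\<Sum>k'\<in>UNIV. \<Sum>l'\<in>UNIV.
        T k' l' * ((\<Sum>i\<in>UNIV. \<xi> i k * cnj (\<xi> i k')) * (\<Sum>j\<in>UNIV. \<xi> j l' * cnj (\<xi> j l))))"
    by (simp only: sum_product) (simp only: sum_distrib_left)
  also have "\<dots> = T k l"
    by (simp add: orthonormal_basis_resolution_of_identity[OF on] if_zero_complex_simps sum.delta sum.delta')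
  finally show ?thesis by simp
qed

lemma block_diagonal_classical_quantum:
  fixes \<rho> :: "('a::finite \<times> 'b::finite) cop"
  assumes st: "is_state \<rho>" and on: "orthonormal_basis \<xi>"
    and off: "\<And>i j. i \<noteq> j \<Longrightarrow> partial_elem \<rho> (\<xi> i) (\<xi> j) = (\<lambda>_ _. 0)"
  shows "\<exists>(p :: 'b \<Rightarrow> real) (\<rho>A :: 'b \<Rightarrow> 'a cop). (\<forall>i. 0 \<le> p i) \<and> (\<Sum>i\<in>UNIV. p i) = 1 \<and>
       (\<forall>i. is_state (\<rho>A i)) \<and>
       \<rho> = (\<lambda>x y. \<Sum>i\<in>UNIV. complex_of_real (p i) * tensor (\<rho>A i) (ketbra (\<xi> i)) x y)"
proof -
  have "\<forall>i. \<exists>p \<sigma>. 0 \<le> p \<and> is_state \<sigma> \<and> partial_elem \<rho> (\<xi> i) (\<xi> i) = (\<lambda>a b. complex_of_real p * \<sigma> a b)"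
    using st by (intro allI psd_eq_scaled_state psd_partial_elem) (simp add: is_state_def)
  then obtain p \<rho>A where p: "\<And>i. 0 \<le> p i" and states: "\<And>i. is_state (\<rho>A i)"
    and blocks: "\<And>i. partial_elem \<rho> (\<xi> i) (\<xi> i) = (\<lambda>a b. complex_of_real (p i) * \<rho>A i a b)"
    by metis
  have "\<rho> (a, k) (b, l) = (\<Sum>i\<in>UNIV. complex_of_real (p i) * tensor (\<rho>A i) (ketbra (\<xi> i)) (a, k) (b, l))"
    for a k b l
  proof -
    have "\<rho> (a, k) (b, l) = (\<Sum>i\<in>UNIV. \<Sum>j\<in>UNIV. partial_elem \<rho> (\<xi> i) (\<xi> j) a b * (\<xi> i k * cnj (\<xi> j l)))"
      using matrix_basis_expansion[OF on, of "\<lambda>k l. \<rho> (a, k) (b, l)" k l]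
      by (simp add: mat_elem_def partial_elem_def)
    also have "\<dots> = (\<Sum>i\<in>UNIV. partial_elem \<rho> (\<xi> i) (\<xi> i) a b * (\<xi> i k * cnj (\<xi> i l)))"
    proof (rule sum.cong[OF refl])
      fix i
      have "(\<Sum>j\<in>UNIV. partial_elem \<rho> (\<xi> i) (\<xi> j) a b * (\<xi> i k * cnj (\<xi> j l))) =
          (\<Sum>j\<in>UNIV. if j = i then partial_elem \<rho> (\<xi> i) (\<xi> i) a b * (\<xi> i k * cnj (\<xi> i l)) else 0)"
        by (rule sum.cong) (auto simp: off)
      then show "(\<Sum>j\<in>UNIV. partial_elem \<rho> (\<xi> i) (\<xi> j) a b * (\<xi> i k * cnj (\<xi> j l))) =
          partial_elem \<rho> (\<xi> i) (\<xi> i) a b * (\<xi> i k * cnj (\<xi> i l))"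
        by simp
    qed
    finally show ?thesis by (simp add: blocks tensor_def ketbra_def mult.assoc)
  qed
  then have cq: "\<rho> = (\<lambda>x y. \<Sum>i\<in>UNIV. complex_of_real (p i) * tensor (\<rho>A i) (ketbra (\<xi> i)) x y)"
    by (intro ext) auto
  have "op_trace \<rho> = (\<Sum>i\<in>UNIV. complex_of_real (p i) * op_trace (tensor (\<rho>A i) (ketbra (\<xi> i))))"
    by (simp add: cq op_trace_sum op_trace_def sum_distrib_left)
  also have "\<dots> = complex_of_real (\<Sum>i\<in>UNIV. p i)"
    using on states by (simp add: op_trace_tensor op_trace_ketbra orthonormal_basis_def is_state_def)
  finally have "(\<Sum>i\<in>UNIV. p i) = 1"
    using st by (simp add: is_state_def flip: of_real_sum)
  then show ?thesis using p states cq by blast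
qed

section \<open>Zero maximal steered coherence forces block-diagonal form\<close>

definition rows :: "complex^'n^'n \<Rightarrow> 'n \<Rightarrow> 'n \<Rightarrow> complex" where
  "rows X = (\<lambda>i k. X $ i $ k)"

lemma rows_vec_of [simp]: "rows (\<chi> i. vec_of (\<xi> i)) = \<xi>"
  by (simp add: rows_def vec_of_def)

lemma compact_eigenbases: "compact {X :: complex^'n::finite^'n. is_eigenbasis S (rows X)}"
proof -
  let ?E = "{X :: complex^'n^'n. is_eigenbasis S (rows X)}"
  have "?E = {X. (\<forall>i j. cinner (\<lambda>k. X $ i $ k) (\<lambda>k. X $ j $ k) = (if i = j then 1 else 0)) \<and>
      (\<forall>i l. mat_vec S (\<lambda>k. X $ i $ k) l = sesq S (\<lambda>k. X $ i $ k) (\<lambda>k. X $ i $ k) * X $ i $ l)}"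
    by (auto simp: eigenbasis_iff orthonormal_basis_def rows_def fun_eq_iff)
  then have "closed ?E"
    unfolding mat_vec_def sesq_def cinner_def
    by (simp only:) (intro closed_Collect_conj closed_Collect_all closed_Collect_eq continuous_intros)
  moreover have "norm X \<le> real CARD('n)" if "X \<in> ?E" for X
  proof -
    have "cinner (rows X i) (rows X i) = 1" for i
      using that by (simp add: eigenbasis_iff orthonormal_basis_def)
    moreover have "vec_of (rows X i) = X $ i" for i by (simp add: rows_def vec_of_def)
    ultimately have rows_norm: "norm (X $ i) = 1" for i by (metis norm_vec_of_eq_1_iff)
    have "norm X = L2_set (\<lambda>i. norm (X $ i)) UNIV" by (simp add: norm_vec_def)
    also have "\<dots> \<le> (\<Sum>i\<in>UNIV. norm (X $ i))" by (rule L2_set_le_sum) auto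
    finally show ?thesis by (simp add: rows_norm)
  qed
  then have "bounded ?E" unfolding bounded_iff by blast
  ultimately show ?thesis by (simp add: compact_eq_bounded_closed)
qed

lemma eigenbasis_minimizer_exists:
  fixes S :: "'n::finite cop" and F :: "('n \<Rightarrow> 'n \<Rightarrow> complex) \<Rightarrow> real"
  assumes "hermitian S" and F: "continuous_on UNIV (\<lambda>X :: complex^'n^'n. F (rows X))"
  shows "\<exists>\<xi>. is_eigenbasis S \<xi> \<and> (\<forall>\<xi>'. is_eigenbasis S \<xi>' \<longrightarrow> F \<xi> \<le> F \<xi>')"
proof -
  let ?E = "{X :: complex^'n^'n. is_eigenbasis S (rows X)}"
  obtain \<xi> where "is_eigenbasis S \<xi>"
    using hermitian_spectral[OF assms(1)] by (auto simp: eigenbasis_iff)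
  then have "(\<chi> i. vec_of (\<xi> i)) \<in> ?E" by simp
  then obtain X where "X \<in> ?E" and min: "\<And>Y. Y \<in> ?E \<Longrightarrow> F (rows X) \<le> F (rows Y)"
    using continuous_attains_inf[OF compact_eigenbases, of _ "\<lambda>X. F (rows X)"]
      continuous_on_subset[OF F] by blast
  moreover have "F (rows X) \<le> F \<xi>'" if "is_eigenbasis S \<xi>'" for \<xi>'
    using min[of "\<chi> i. vec_of (\<xi>' i)"] that by simp
  ultimately show ?thesis by blast
qed

lemma ptrace_A_eq_steered_unnorm_op_id: "ptrace_A \<rho> = steered_unnorm \<rho> op_id"
  by (simp add: fun_eq_iff steered_unnorm_apply ptrace_A_def op_id_def if_zero_complex_simps sum.delta)

definition off_block_mass :: "('a::finite \<times> 'b::finite) cop \<Rightarrow> ('b \<Rightarrow> 'b \<Rightarrow> complex) \<Rightarrow> real" where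
  "off_block_mass \<rho> \<xi> = (\<Sum>i\<in>UNIV. \<Sum>j\<in>UNIV. \<Sum>a\<in>UNIV. \<Sum>b\<in>UNIV.
     if i \<noteq> j then cmod (partial_elem \<rho> (\<xi> i) (\<xi> j) a b) else 0)"

lemma off_block_mass_le_steered_coherence_sup:
  fixes \<rho> :: "('a::finite \<times> 'b::finite) cop"
  assumes "is_state \<rho>" "orthonormal_basis \<xi>"
  shows "off_block_mass \<rho> \<xi> \<le> 4 * real (CARD('b) * CARD('b) * CARD('a) * CARD('a)) * steered_coherence_sup \<rho> \<xi>"
proof -
  have "off_block_mass \<rho> \<xi> \<le> (\<Sum>i\<in>(UNIV::'b set). \<Sum>j\<in>(UNIV::'b set). \<Sum>a\<in>(UNIV::'a set). \<Sum>b\<in>(UNIV::'a set).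
      4 * steered_coherence_sup \<rho> \<xi>)"
    unfolding off_block_mass_def
    using partial_elem_le_steered_coherence_sup[OF assms] steered_coherence_sup_bounds(1)[OF assms]
    by (intro sum_mono) auto
  then show ?thesis by simp
qed

lemma off_block_mass_nonneg: "0 \<le> off_block_mass \<rho> \<xi>"
  unfolding off_block_mass_def by (intro sum_nonneg) auto

lemma off_block_mass_eq_0_iff:
  "off_block_mass \<rho> \<xi> = 0 \<longleftrightarrow> (\<forall>i j. i \<noteq> j \<longrightarrow> partial_elem \<rho> (\<xi> i) (\<xi> j) = (\<lambda>_ _. 0))"
  unfolding off_block_mass_def
  by (simp add: sum_nonneg_eq_0_iff sum_nonneg fun_eq_iff)

text \<open>The infimum over eigenbases need not be attained, but the off-diagonal block mass is
  continuous on the compact set of eigenbases; its minimum is bounded by every steered coherence supremum,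
  hence by their infimum \<open>0\<close>.\<close>
lemma max_steered_coherence_zero_block_diagonal:
  fixes \<rho> :: "('a::finite \<times> 'b::finite) cop"
  assumes st: "is_state \<rho>" and zero: "max_steered_coherence \<rho> = 0"
  shows "\<exists>\<xi>. orthonormal_basis \<xi> \<and> (\<forall>i j. i \<noteq> j \<longrightarrow> partial_elem \<rho> (\<xi> i) (\<xi> j) = (\<lambda>_ _. 0))"
proof -
  have "hermitian (ptrace_A \<rho>)"
    using st by (simp add: ptrace_A_eq_steered_unnorm_op_id psd_hermitian psd_steered_unnorm psd_op_id
        is_state_def)
  moreover have "continuous_on UNIV (\<lambda>X :: complex^'b^'b. off_block_mass \<rho> (rows X))"
    unfolding off_block_mass_def partial_elem_def rows_def
  proof (intro continuous_on_sum)
    fix i j :: 'b and a b :: 'a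
    show "continuous_on UNIV (\<lambda>X :: complex^'b^'b. if i \<noteq> j
        then cmod (\<Sum>k\<in>UNIV. \<Sum>l\<in>UNIV. cnj (X $ i $ k) * \<rho> (a, k) (b, l) * X $ j $ l) else 0)"
      by (cases "i = j") (auto intro!: continuous_intros)
  qed
  ultimately obtain \<xi> where eb: "is_eigenbasis (ptrace_A \<rho>) \<xi>"
    and min: "\<And>\<xi>'. is_eigenbasis (ptrace_A \<rho>) \<xi>' \<Longrightarrow> off_block_mass \<rho> \<xi> \<le> off_block_mass \<rho> \<xi>'"
    by (metis eigenbasis_minimizer_exists)
  define K where "K = 4 * real (CARD('b) * CARD('b) * CARD('a) * CARD('a))"
  have "K > 0" by (simp add: K_def)
  define G where "G = {steered_coherence_sup \<rho> \<xi>' | \<xi>'. is_eigenbasis (ptrace_A \<rho>) \<xi>'}"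
  have "off_block_mass \<rho> \<xi> / K \<le> Inf G"
  proof (rule cInf_greatest)
    show "G \<noteq> {}" using eb by (auto simp: G_def)
    fix g
    assume "g \<in> G"
    then obtain \<xi>' where eb': "is_eigenbasis (ptrace_A \<rho>) \<xi>'" and g: "g = steered_coherence_sup \<rho> \<xi>'"
      by (auto simp: G_def)
    have "off_block_mass \<rho> \<xi> \<le> K * g"
      using min[OF eb'] off_block_mass_le_steered_coherence_sup[OF st, of \<xi>'] eb'
      by (simp add: g K_def is_eigenbasis_def)
    then show "off_block_mass \<rho> \<xi> / K \<le> g" using \<open>K > 0\<close> by (simp add: divide_le_eq mult.commute)
  qed
  also have "Inf G = 0" using zero by (simp add: G_def max_steered_coherence_eq_Inf)
  finally have "off_block_mass \<rho> \<xi> \<le> 0"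
    using \<open>K > 0\<close> by (simp add: divide_le_0_iff)
  then have "off_block_mass \<rho> \<xi> = 0"
    using off_block_mass_nonneg by (rule antisym)
  then show ?thesis using eb by (auto simp: off_block_mass_eq_0_iff is_eigenbasis_def)
qed

lemma max_steered_coherence_zero_classical_quantum:
  fixes \<rho> :: "('a::finite \<times> 'b::finite) cop"
  assumes st: "is_state \<rho>" and "max_steered_coherence \<rho> = 0"
  shows "\<exists>(\<xi> :: 'b \<Rightarrow> ('b \<Rightarrow> complex)) (p :: 'b \<Rightarrow> real) (\<rho>A :: 'b \<Rightarrow> 'a cop).
       orthonormal_basis \<xi> \<and> (\<forall>i. 0 \<le> p i) \<and> (\<Sum>i\<in>UNIV. p i) = 1 \<and>
       (\<forall>i. is_state (\<rho>A i)) \<and>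
       \<rho> = (\<lambda>x y. \<Sum>i\<in>UNIV. complex_of_real (p i) * tensor (\<rho>A i) (ketbra (\<xi> i)) x y)"
proof -
  obtain \<xi> where on: "orthonormal_basis \<xi>"
    and off: "\<forall>i j. i \<noteq> j \<longrightarrow> partial_elem \<rho> (\<xi> i) (\<xi> j) = (\<lambda>_ _. 0)"
    using max_steered_coherence_zero_block_diagonal[OF assms] by blast
  then show ?thesis
    using block_diagonal_classical_quantum[OF st on] by blast
qed

theorem mainTheorem1:
  fixes \<rho> :: "('a::finite \<times> 'b::finite) cop"
  assumes "is_state \<rho>"
  shows "max_steered_coherence \<rho> = 0 \<longleftrightarrow>
    (\<exists>(\<xi> :: 'b \<Rightarrow> ('b \<Rightarrow> complex)) (p :: 'b \<Rightarrow> real) (\<rho>A :: 'b \<Rightarrow> 'a cop).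
       orthonormal_basis \<xi> \<and> (\<forall>i. 0 \<le> p i) \<and> (\<Sum>i\<in>UNIV. p i) = 1 \<and>
       (\<forall>i. is_state (\<rho>A i)) \<and>
       \<rho> = (\<lambda>x y. \<Sum>i\<in>UNIV. complex_of_real (p i) * tensor (\<rho>A i) (ketbra (\<xi> i)) x y))"
  using max_steered_coherence_zero_classical_quantum[OF assms]
    classical_quantum_max_steered_coherence[OF _ _ assms]
  by blast

end
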